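(* For $n\ge 1$ and $1\le p\le n$ let $b(n,p)$ be the number of $\alpha\in\mathcal{ORCT}^*_n$ with $|\mathrm{Im}\,\alpha|=p$ and exactly one fixed point, and set $b(n,0)=0$ for all $n\ge 0$. Then $b(n,1)=n$ for all $n\ge1$, $b(2,2)=0$, and for all $n\ge p\ge 2$, $$b(n,p)=(n-p+1)\binom{n-2}{p-1}+b(n-2,p-2).$$
   Context: $X_n=\{1,2,\dots,n\}$ with its usual order; maps are written on the right ($x\alpha$). A map $\alpha:X_n\to X_n$ is order-reversing if $x\le y$ implies $x\alpha\ge y\alpha$, and a contraction if $|x\alpha-y\alpha|\le|x-y|$ for all $x,y$. $\mathcal{ORCT}^*_n$ is the set of all order-reversing contractions $X_n\to X_n$ defined on all of $X_n$ (this includes the constant maps). A fixed point of $\alpha$ is $x$ with $x\alpha=x$. Binomial coefficients $\binom{a}{b}$ with $b>a\ge0$ are $0$. *)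

theory Defs
  imports Main "HOL-Library.FuncSet"
begin

text \<open>Full transformations of X_n = {1..n}, represented extensionally
  (value undefined outside {1..n}); order-reversing contractions.\<close>
definition ORCT :: "nat \<Rightarrow> (nat \<Rightarrow> nat) set" where
  "ORCT n = {\<alpha> \<in> {1..n} \<rightarrow>\<^sub>E {1..n}.
      (\<forall>x\<in>{1..n}. \<forall>y\<in>{1..n}. x \<le> y \<longrightarrow> \<alpha> y \<le> \<alpha> x) \<and>
      (\<forall>x\<in>{1..n}. \<forall>y\<in>{1..n}. \<bar>int (\<alpha> x) - int (\<alpha> y)\<bar> \<le> \<bar>int x - int y\<bar>)}"

definition fixed_points :: "nat \<Rightarrow> (nat \<Rightarrow> nat) \<Rightarrow> nat set" where
  "fixed_points n \<alpha> = {x \<in> {1..n}. \<alpha> x = x}"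

definition b :: "nat \<Rightarrow> nat \<Rightarrow> nat" where
  "b n p = (if p = 0 then 0 else
     card {\<alpha> \<in> ORCT n. card (\<alpha> ` {1..n}) = p \<and> card (fixed_points n \<alpha>) = 1})"

end

theory Submission
  imports Defs
begin

(* An order-reversing contraction of {1..m} into {1..n} decreases by 0 or 1 at each step, so it
   is determined by its last value and its set of descents, and its rank is one more than the
   number of descents; hence there are (n + 1 - p) * C(m - 1, p - 1) of rank p.
   A map a with a fixed point has exactly one, x. Deleting x gives a contraction
   {1..n-1} -> {1..n} of the same rank unless a (x - 1) = x + 1 and a (x + 1) = x - 1, and
   conversely every such contraction has exactly one place where its graph crosses the diagonal,
   where a fixed point can be inserted. In the exceptional case, removing x and x + 1 and lowering
   the values left of x by 2 leaves a map of {1..n-2} of rank p - 2 with the fixed point x - 1;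
   this is again a bijection. *)

definition ORC :: "nat \<Rightarrow> nat \<Rightarrow> (nat \<Rightarrow> nat) set" where
  "ORC m n = {g \<in> {1..m} \<rightarrow>\<^sub>E {1..n}.
     \<forall>x. 1 \<le> x \<longrightarrow> x < m \<longrightarrow> g (Suc x) \<le> g x \<and> g x \<le> Suc (g (Suc x))}"

lemma ORC_step:
  "g \<in> ORC m n \<Longrightarrow> 1 \<le> x \<Longrightarrow> x < m \<Longrightarrow> g (Suc x) \<le> g x \<and> g x \<le> Suc (g (Suc x))"
  unfolding ORC_def by auto

lemma ORC_range: "g \<in> ORC m n \<Longrightarrow> x \<in> {1..m} \<Longrightarrow> g x \<in> {1..n}"
  unfolding ORC_def by auto

lemma ORC_restrict: "g \<in> ORC m n \<Longrightarrow> restrict g {1..m} = g"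
  unfolding ORC_def by auto

lemma restrict_in_ORC:
  assumes "\<And>y. y \<in> {1..m} \<Longrightarrow> f y \<in> {1..n}"
    and "\<And>y. 1 \<le> y \<Longrightarrow> y < m \<Longrightarrow> f (Suc y) \<le> f y \<and> f y \<le> Suc (f (Suc y))"
  shows "restrict f {1..m} \<in> ORC m n"
  unfolding ORC_def using assms by auto

lemma ORC_antimono_contract:
  assumes g: "g \<in> ORC m n" and "1 \<le> x" "x \<le> y" "y \<le> m"
  shows "g y \<le> g x \<and> g x \<le> g y + (y - x)"
  using \<open>x \<le> y\<close> \<open>y \<le> m\<close>
proof (induction y rule: dec_induct)
  case (step k)
  then show ?case using ORC_step[OF g, of k] \<open>1 \<le> x\<close> by auto
qed simp

lemma ORCT_eq_ORC: "ORCT n = ORC n n"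
proof (intro set_eqI iffI)
  fix g assume "g \<in> ORCT n"
  then have g: "g \<in> {1..n} \<rightarrow>\<^sub>E {1..n}"
    and anti: "\<And>x y. x \<in> {1..n} \<Longrightarrow> y \<in> {1..n} \<Longrightarrow> x \<le> y \<Longrightarrow> g y \<le> g x"
    and contr: "\<And>x y. x \<in> {1..n} \<Longrightarrow> y \<in> {1..n} \<Longrightarrow> \<bar>int (g x) - int (g y)\<bar> \<le> \<bar>int x - int y\<bar>"
    unfolding ORCT_def by auto
  have "g (Suc x) \<le> g x \<and> g x \<le> Suc (g (Suc x))" if "1 \<le> x" "x < n" for x
    using anti[of x "Suc x"] contr[of x "Suc x"] that by auto
  then show "g \<in> ORC n n" using g unfolding ORC_def by auto
next
  fix g assume g: "g \<in> ORC n n"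
  have "\<bar>int (g x) - int (g y)\<bar> \<le> \<bar>int x - int y\<bar>" if "x \<in> {1..n}" "y \<in> {1..n}" for x y
    using ORC_antimono_contract[OF g, of x y] ORC_antimono_contract[OF g, of y x] that
    by (cases "x \<le> y") auto
  then show "g \<in> ORCT n"
    using g ORC_antimono_contract[OF g] unfolding ORCT_def ORC_def by auto
qed

lemma ORC_image:
  assumes g: "g \<in> ORC m n" and "1 \<le> m"
  shows "g ` {1..m} = {g m..g 1}"
proof -
  have "g ` {1..k} = {g k..g 1}" if "1 \<le> k" "k \<le> m" for k
    using that
  proof (induction k rule: dec_induct)
    case (step k)
    have "{1..Suc k} = insert (Suc k) {1..k}" by auto
    then show ?case
      using step ORC_step[OF g, of k] ORC_antimono_contract[OF g, of 1 k] by auto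
  qed simp
  then show ?thesis using assms by simp
qed

lemma card_ORC_image:
  assumes "g \<in> ORC m n" and "1 \<le> m"
  shows "card (g ` {1..m}) = Suc (g 1) - g m"
  using ORC_image[OF assms] by simp

lemma card_filter_ge_Suc:
  assumes "finite S"
  shows "card {s \<in> S. x \<le> s} = card {s \<in> S. Suc x \<le> s} + (if x \<in> S then 1 else 0)"
proof -
  have "{s \<in> S. x \<le> s} = {s \<in> S. Suc x \<le> s} \<union> ({x} \<inter> S)" by auto
  moreover have "card ({s \<in> S. Suc x \<le> s} \<union> ({x} \<inter> S)) = card {s \<in> S. Suc x \<le> s} + card ({x} \<inter> S)"
    by (rule card_Un_disjoint) (use assms in auto)
  ultimately show ?thesis by simp
qed

definition descents :: "nat \<Rightarrow> (nat \<Rightarrow> nat) \<Rightarrow> nat set" where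
  "descents m g = {s \<in> {1..m-1}. g (Suc s) < g s}"

lemma finite_descents: "finite (descents m g)"
  unfolding descents_def by auto

lemma ORC_eq_last_plus_descents:
  assumes g: "g \<in> ORC m n" and "1 \<le> x" "x \<le> m"
  shows "g x = g m + card {s \<in> descents m g. x \<le> s}"
  using \<open>x \<le> m\<close> \<open>1 \<le> x\<close>
proof (induction x rule: inc_induct)
  case base
  have "{s \<in> descents m g. m \<le> s} = {}" unfolding descents_def by auto
  then show ?case by (metis add_0_right card.empty)
next
  case (step k)
  have "k \<in> descents m g \<longleftrightarrow> g (Suc k) < g k" using step unfolding descents_def by auto
  then show ?case
    using step card_filter_ge_Suc[OF finite_descents, of m g k] ORC_step[OF g, of k] by auto
qed

lemma card_image_ORC_eq_descents:
  assumes g: "g \<in> ORC m n" and "1 \<le> m"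
  shows "card (g ` {1..m}) = Suc (card (descents m g))"
proof -
  have "{s \<in> descents m g. 1 \<le> s} = descents m g" unfolding descents_def by auto
  then show ?thesis
    using card_ORC_image[OF assms] ORC_eq_last_plus_descents[OF g, of 1] assms by simp
qed

definition from_descents :: "nat \<Rightarrow> nat \<Rightarrow> nat set \<Rightarrow> (nat \<Rightarrow> nat)" where
  "from_descents m c S = restrict (\<lambda>x. c + card {s \<in> S. x \<le> s}) {1..m}"

lemma from_descents_descents:
  assumes g: "g \<in> ORC m n"
  shows "from_descents m (g m) (descents m g) = g"
proof -
  have "from_descents m (g m) (descents m g) = restrict g {1..m}"
    unfolding from_descents_def
    by (rule restrict_ext) (metis atLeastAtMost_iff ORC_eq_last_plus_descents[OF g])
  then show ?thesis using ORC_restrict[OF g] by simp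
qed

lemma
  assumes S: "S \<subseteq> {1..m-1}"
  shows from_descents_last: "1 \<le> m \<Longrightarrow> from_descents m c S m = c"
    and descents_from_descents: "descents m (from_descents m c S) = S"
proof -
  have "{s \<in> S. m \<le> s} = {}" using S by fastforce
  then have "card {s \<in> S. m \<le> s} = 0" by (simp only: card.empty)
  then show "1 \<le> m \<Longrightarrow> from_descents m c S m = c"
    unfolding from_descents_def by simp
  have fin: "finite S" using S finite_subset by blast
  have "s \<in> descents m (from_descents m c S) \<longleftrightarrow> s \<in> S" for s
  proof (cases "s \<in> {1..m-1}")
    case True
    then have "s \<in> {1..m}" "Suc s \<in> {1..m}" by auto
    then have "from_descents m c S s = from_descents m c S (Suc s) + (if s \<in> S then 1 else 0)"
      using card_filter_ge_Suc[OF fin, of s] unfolding from_descents_def by simp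
    then show ?thesis using True unfolding descents_def by auto
  next
    case False
    then show ?thesis using S unfolding descents_def by auto
  qed
  then show "descents m (from_descents m c S) = S" by auto
qed

lemma from_descents_ORC:
  assumes S: "S \<subseteq> {1..m-1}" and "1 \<le> c" "c + card S \<le> n"
  shows "from_descents m c S \<in> ORC m n"
  unfolding from_descents_def
proof (rule restrict_in_ORC)
  have fin: "finite S" using S finite_subset by blast
  show "c + card {s \<in> S. y \<le> s} \<in> {1..n}" for y
    using card_mono[OF fin, of "{s \<in> S. y \<le> s}"] assms by auto
  show "c + card {s \<in> S. Suc y \<le> s} \<le> c + card {s \<in> S. y \<le> s} \<and>
        c + card {s \<in> S. y \<le> s} \<le> Suc (c + card {s \<in> S. Suc y \<le> s})" for y
    using card_filter_ge_Suc[OF fin, of y] by auto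
qed

definition ORC_rank :: "nat \<Rightarrow> nat \<Rightarrow> nat \<Rightarrow> (nat \<Rightarrow> nat) set" where
  "ORC_rank m n p = {g \<in> ORC m n. card (g ` {1..m}) = p}"

lemma card_ORC_rank:
  assumes m: "1 \<le> m" and p: "1 \<le> p"
  shows "card (ORC_rank m n p) = (n + 1 - p) * ((m - 1) choose (p - 1))"
proof -
  define T where "T = {1..n+1-p} \<times> {S. S \<subseteq> {1..m-1} \<and> card S = p - 1}"
  have "bij_betw (\<lambda>g. (g m, descents m g)) (ORC_rank m n p) T"
  proof (rule bij_betw_byWitness[where f' = "\<lambda>(c, S). from_descents m c S"])
    show "\<forall>g\<in>ORC_rank m n p. (\<lambda>(c, S). from_descents m c S) (g m, descents m g) = g"
      unfolding ORC_rank_def using from_descents_descents by auto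
    show "\<forall>t\<in>T. (\<lambda>g. (g m, descents m g)) ((\<lambda>(c, S). from_descents m c S) t) = t"
      unfolding T_def using from_descents_last descents_from_descents m by auto
    show "(\<lambda>g. (g m, descents m g)) ` ORC_rank m n p \<subseteq> T"
    proof clarify
      fix g assume "g \<in> ORC_rank m n p"
      then have g: "g \<in> ORC m n" and "card (descents m g) = p - 1"
        using card_image_ORC_eq_descents m unfolding ORC_rank_def by auto
      moreover have "g m \<in> {1..n}" "g 1 \<in> {1..n}" using ORC_range[OF g] m by auto
      moreover have "Suc (g 1) - g m = p"
        using \<open>g \<in> ORC_rank m n p\<close> card_ORC_image[OF g m] unfolding ORC_rank_def by simp
      moreover have "descents m g \<subseteq> {1..m-1}" unfolding descents_def by auto
      ultimately show "(g m, descents m g) \<in> T" unfolding T_def by auto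
    qed
    show "(\<lambda>(c, S). from_descents m c S) ` T \<subseteq> ORC_rank m n p"
    proof clarify
      fix c S assume "(c, S) \<in> T"
      then have S: "S \<subseteq> {1..m-1}" "card S = p - 1" and "1 \<le> c" "c + card S \<le> n"
        unfolding T_def using p by auto
      then have "from_descents m c S \<in> ORC m n" using from_descents_ORC by blast
      then show "from_descents m c S \<in> ORC_rank m n p"
        using card_image_ORC_eq_descents[of _ m n] descents_from_descents[OF S(1)] S(2) m p
        unfolding ORC_rank_def by auto
    qed
  qed
  moreover have "card T = (n + 1 - p) * ((m - 1) choose (p - 1))"
    unfolding T_def card_cartesian_product by (simp add: n_subsets)
  ultimately show ?thesis using bij_betw_same_card by metis
qed

lemma ORC_fixed_point_unique:
  assumes a: "a \<in> ORC n k" and x: "x \<in> {1..n}" "a x = x" and y: "y \<in> {1..n}" "a y = y"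
  shows "x = y"
  using ORC_antimono_contract[OF a, of x y] ORC_antimono_contract[OF a, of y x] x y
  by (cases "x \<le> y") auto

definition fixpt :: "nat \<Rightarrow> (nat \<Rightarrow> nat) \<Rightarrow> nat" where
  "fixpt n a = (THE x. x \<in> {1..n} \<and> a x = x)"

lemma fixpt_eq:
  assumes "a \<in> ORC n k" "x \<in> {1..n}" "a x = x"
  shows "fixpt n a = x"
  unfolding fixpt_def using ORC_fixed_point_unique[OF assms] assms(2,3) by blast

definition ORC_fix :: "nat \<Rightarrow> nat \<Rightarrow> (nat \<Rightarrow> nat) set" where
  "ORC_fix n p = {a \<in> ORC_rank n n p. \<exists>x\<in>{1..n}. a x = x}"

lemma b_eq_card_ORC_fix: "b n p = card (ORC_fix n p)"
proof (cases "p = 0")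
  case True
  have "ORC_fix n 0 = {}"
    unfolding ORC_fix_def ORC_rank_def by (auto simp: card_eq_0_iff)
  then show ?thesis using True unfolding b_def by simp
next
  case False
  have "card (fixed_points n a) = 1 \<longleftrightarrow> (\<exists>x\<in>{1..n}. a x = x)" if "a \<in> ORC n n" for a
  proof
    assume "card (fixed_points n a) = 1"
    then obtain x where "fixed_points n a = {x}" by (auto simp: card_1_singleton_iff)
    then show "\<exists>x\<in>{1..n}. a x = x" unfolding fixed_points_def by blast
  next
    assume "\<exists>x\<in>{1..n}. a x = x"
    then obtain x where "x \<in> {1..n}" "a x = x" by blast
    then have "fixed_points n a = {x}"
      using ORC_fixed_point_unique[OF that] unfolding fixed_points_def by blast
    then show "card (fixed_points n a) = 1" by simp
  qed
  then have "{a \<in> ORCT n. card (a ` {1..n}) = p \<and> card (fixed_points n a) = 1} = ORC_fix n p"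
    unfolding ORCT_eq_ORC ORC_fix_def ORC_rank_def by blast
  then show ?thesis using False unfolding b_def by simp
qed

lemma ORC_fix_rank_one:
  assumes "1 \<le> n"
  shows "ORC_fix n 1 = ORC_rank n n 1"
proof (intro set_eqI iffI)
  fix a assume a_rank: "a \<in> ORC_rank n n 1"
  then have a: "a \<in> ORC n n" and "Suc (a 1) - a n = 1"
    using card_ORC_image assms unfolding ORC_rank_def by auto
  then have "a x = a 1" if "x \<in> {1..n}" for x
    using ORC_antimono_contract[OF a, of 1 x] ORC_antimono_contract[OF a, of x n] that by auto
  moreover have "a 1 \<in> {1..n}" using ORC_range[OF a] assms by simp
  ultimately show "a \<in> ORC_fix n 1" using a_rank unfolding ORC_fix_def by blast
qed (simp add: ORC_fix_def)

definition delete_point :: "nat \<Rightarrow> nat \<Rightarrow> (nat \<Rightarrow> nat) \<Rightarrow> (nat \<Rightarrow> nat)" where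
  "delete_point n x a = restrict (\<lambda>y. if y < x then a y else a (Suc y)) {1..n-1}"

definition insert_fixed_point :: "nat \<Rightarrow> nat \<Rightarrow> (nat \<Rightarrow> nat) \<Rightarrow> (nat \<Rightarrow> nat)" where
  "insert_fixed_point n x g =
     restrict (\<lambda>y. if y < x then g y else if y = x then x else g (y - 1)) {1..n}"

lemma delete_point_ORC:
  assumes a: "a \<in> ORC n k" and x: "x \<in> {1..n}"
    and seam: "1 < x \<Longrightarrow> x < n \<Longrightarrow> a (x - 1) \<le> Suc (a (Suc x))"
  shows "delete_point n x a \<in> ORC (n - 1) k"
  unfolding delete_point_def
proof (rule restrict_in_ORC)
  show "(if y < x then a y else a (Suc y)) \<in> {1..k}" if "y \<in> {1..n-1}" for y
    using ORC_range[OF a] that by auto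
  fix y assume y: "1 \<le> y" "y < n - 1"
  consider "Suc y < x" | "Suc y = x" | "x \<le> y" by linarith
  then show "(if Suc y < x then a (Suc y) else a (Suc (Suc y))) \<le> (if y < x then a y else a (Suc y)) \<and>
             (if y < x then a y else a (Suc y)) \<le> Suc (if Suc y < x then a (Suc y) else a (Suc (Suc y)))"
  proof cases
    case 1
    then show ?thesis using ORC_step[OF a, of y] y by auto
  next
    case 2
    then show ?thesis using ORC_antimono_contract[OF a, of y "Suc x"] seam y by auto
  next
    case 3
    then show ?thesis using ORC_step[OF a, of "Suc y"] y by auto
  qed
qed

lemma delete_fixed_point_ends:
  assumes a: "a \<in> ORC n n" and x: "x \<in> {1..n}" "a x = x" and "2 \<le> n"
  shows "delete_point n x a 1 = a 1" "delete_point n x a (n - 1) = a n"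
proof -
  have "a (Suc 1) = a 1" if "x = 1"
    using ORC_step[OF a, of 1] ORC_range[OF a, of "Suc 1"] x that \<open>2 \<le> n\<close> by auto
  then show "delete_point n x a 1 = a 1"
    unfolding delete_point_def using x \<open>2 \<le> n\<close> by auto
  have "1 \<le> n - 1" "n - 1 < n" using \<open>2 \<le> n\<close> by auto
  then have "a (n - 1) = a n" if "x = n"
    using ORC_step[OF a] ORC_range[OF a, of "n - 1"] x that by fastforce
  then show "delete_point n x a (n - 1) = a n"
    unfolding delete_point_def using x \<open>2 \<le> n\<close> by auto
qed

lemma insert_delete_point:
  assumes a: "a \<in> ORC n k" and x: "x \<in> {1..n}" "a x = x"
  shows "insert_fixed_point n x (delete_point n x a) = a"
proof -
  have "insert_fixed_point n x (delete_point n x a) = restrict a {1..n}"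
    unfolding insert_fixed_point_def delete_point_def using x by (intro restrict_ext) auto
  then show ?thesis using ORC_restrict[OF a] by simp
qed

lemma delete_insert_fixed_point:
  assumes g: "g \<in> ORC (n - 1) k" and x: "x \<in> {1..n}"
  shows "delete_point n x (insert_fixed_point n x g) = g"
proof -
  have "delete_point n x (insert_fixed_point n x g) = restrict g {1..n-1}"
    unfolding insert_fixed_point_def delete_point_def using x by (intro restrict_ext) auto
  then show ?thesis using ORC_restrict[OF g] by simp
qed

(* x is where the graph of g crosses the diagonal: g (x - 1) \<ge> x \<ge> g x. *)
definition insertion_slot :: "nat \<Rightarrow> (nat \<Rightarrow> nat) \<Rightarrow> nat \<Rightarrow> bool" where
  "insertion_slot n g x \<longleftrightarrow> x \<in> {1..n} \<and> (x = 1 \<or> x \<le> g (x - 1)) \<and> (x = n \<or> g x \<le> x)"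

lemma insertion_slot_exists:
  assumes "1 \<le> n"
  shows "\<exists>x. insertion_slot n g x"
proof -
  let ?P = "\<lambda>x. 1 \<le> x \<and> (x = n \<or> g x \<le> x)"
  define x where "x = (LEAST x. ?P x)"
  have "?P x" "x \<le> n"
    unfolding x_def using LeastI[of ?P n] Least_le[of ?P n] assms by auto
  moreover have "x = 1 \<or> x \<le> g (x - 1)"
    using not_less_Least[of "x - 1" ?P] \<open>?P x\<close> \<open>x \<le> n\<close> unfolding x_def[symmetric] by fastforce
  ultimately show ?thesis unfolding insertion_slot_def by auto
qed

lemma insertion_slot_unique:
  assumes g: "g \<in> ORC (n - 1) k" and "insertion_slot n g x" "insertion_slot n g y"
  shows "x = y"
proof -
  have "\<not> x < y" if "insertion_slot n g x" "insertion_slot n g y" for x y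
  proof
    assume "x < y"
    then have x: "1 \<le> x" "g x \<le> x" and y: "y \<le> g (y - 1)" "y \<le> n"
      using that unfolding insertion_slot_def by auto
    have "x \<le> y - 1" "y - 1 \<le> n - 1" using \<open>x < y\<close> \<open>y \<le> n\<close> by auto
    then have "g (y - 1) \<le> g x" using ORC_antimono_contract[OF g x(1)] by blast
    then show False using x y \<open>x < y\<close> by linarith
  qed
  then show ?thesis using assms(2,3) by (meson linorder_neqE_nat)
qed

definition insertion_point :: "nat \<Rightarrow> (nat \<Rightarrow> nat) \<Rightarrow> nat" where
  "insertion_point n g = (THE x. insertion_slot n g x)"

lemma insertion_point_eq:
  assumes "g \<in> ORC (n - 1) k" "insertion_slot n g x"
  shows "insertion_point n g = x"
  unfolding insertion_point_def using insertion_slot_unique[OF assms(1)] assms(2) by blast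

lemma insertion_slot_delete_point:
  assumes a: "a \<in> ORC n k" and x: "x \<in> {1..n}" "a x = x"
  shows "insertion_slot n (delete_point n x a) x"
proof -
  have "x \<le> delete_point n x a (x - 1)" if "x \<noteq> 1"
    using ORC_antimono_contract[OF a, of "x - 1" x] x that unfolding delete_point_def by auto
  moreover have "delete_point n x a x \<le> x" if "x \<noteq> n"
    using ORC_antimono_contract[OF a, of x "Suc x"] x that unfolding delete_point_def by auto
  ultimately show ?thesis using x unfolding insertion_slot_def by blast
qed

lemma insert_fixed_point_ORC:
  assumes g: "g \<in> ORC (n - 1) n" and x: "insertion_slot n g x"
  shows "insert_fixed_point n x g \<in> ORC n n"
  unfolding insert_fixed_point_def
proof (rule restrict_in_ORC)
  have left: "x \<le> g (x - 1) \<and> g (x - 1) \<le> Suc x" if "1 < x"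
    using x ORC_range[OF g, of "x - 1"] ORC_step[OF g, of "x - 1"] that
    unfolding insertion_slot_def by fastforce
  have right: "g x \<le> x \<and> x \<le> Suc (g x)" if "x < n"
    using x ORC_step[OF g, of "x - 1"] that unfolding insertion_slot_def by fastforce
  show "(if y < x then g y else if y = x then x else g (y - 1)) \<in> {1..n}" if "y \<in> {1..n}" for y
  proof -
    consider "y < x" | "y = x" | "x < y" by linarith
    then show ?thesis
    proof cases
      case 1
      then have "y \<in> {1..n-1}" using x that unfolding insertion_slot_def by auto
      then show ?thesis using ORC_range[OF g] 1 by auto
    next
      case 3
      then have "y - 1 \<in> {1..n-1}" using x that unfolding insertion_slot_def by auto
      then show ?thesis using ORC_range[OF g] 3 by auto
    qed (use x in \<open>auto simp: insertion_slot_def\<close>)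
  qed
  fix y assume y: "1 \<le> y" "y < n"
  consider "Suc y < x" | "Suc y = x" | "y = x" | "x < y" by linarith
  then show "(if Suc y < x then g (Suc y) else if Suc y = x then x else g (Suc y - 1))
      \<le> (if y < x then g y else if y = x then x else g (y - 1)) \<and>
    (if y < x then g y else if y = x then x else g (y - 1))
      \<le> Suc (if Suc y < x then g (Suc y) else if Suc y = x then x else g (Suc y - 1))"
  proof cases
    case 1
    then show ?thesis using ORC_step[OF g, of y] y x unfolding insertion_slot_def by auto
  next
    case 2
    then show ?thesis using left y by auto
  next
    case 3
    then show ?thesis using right y by auto
  next
    case 4
    then show ?thesis using ORC_step[OF g, of "y - 1"] y x unfolding insertion_slot_def by auto
  qed
qed

lemma insert_fixed_point_ends:
  assumes g: "g \<in> ORC (n - 1) n" and x: "insertion_slot n g x" and "2 \<le> n"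
  shows "insert_fixed_point n x g 1 = g 1" "insert_fixed_point n x g n = g (n - 1)"
proof -
  have "1 \<in> {1..n-1}" "n - 1 \<in> {1..n-1}" using \<open>2 \<le> n\<close> by auto
  then have "g 1 \<in> {1..n}" "g (n - 1) \<in> {1..n}" using ORC_range[OF g] by auto
  then show "insert_fixed_point n x g 1 = g 1" "insert_fixed_point n x g n = g (n - 1)"
    using x \<open>2 \<le> n\<close> unfolding insertion_slot_def insert_fixed_point_def by auto
qed

(* The maps whose fixed point cannot be deleted: the neighbouring values would differ by 2. *)
definition ORC_fix_jump :: "nat \<Rightarrow> nat \<Rightarrow> (nat \<Rightarrow> nat) set" where
  "ORC_fix_jump n p = {a \<in> ORC_fix n p.
     \<exists>x\<in>{2..<n}. a (x - 1) = Suc x \<and> a x = x \<and> a (Suc x) = x - 1}"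

lemma delete_fixed_point_mem:
  assumes a_mem: "a \<in> ORC_fix n p - ORC_fix_jump n p" and "2 \<le> n"
  shows "delete_point n (fixpt n a) a \<in> ORC_rank (n - 1) n p \<and>
         insertion_point n (delete_point n (fixpt n a) a) = fixpt n a \<and>
         insert_fixed_point n (fixpt n a) (delete_point n (fixpt n a) a) = a"
proof -
  obtain x where a: "a \<in> ORC n n" "card (a ` {1..n}) = p" and x: "x \<in> {1..n}" "a x = x"
    using a_mem unfolding ORC_fix_def ORC_rank_def by auto
  have "a (x - 1) \<le> Suc (a (Suc x))" if "1 < x" "x < n"
  proof -
    have "a (x - 1) \<le> Suc x" "x - 1 \<le> a (Suc x)"
      using ORC_step[OF a(1), of "x - 1"] ORC_step[OF a(1), of x] x that by auto
    moreover have "\<not> (a (x - 1) = Suc x \<and> a (Suc x) = x - 1)"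
      using a_mem x that unfolding ORC_fix_jump_def by auto
    ultimately show ?thesis by linarith
  qed
  then have d: "delete_point n x a \<in> ORC (n - 1) n"
    using delete_point_ORC[OF a(1) x(1)] by blast
  have "card (delete_point n x a ` {1..n-1}) = p"
    using card_ORC_image[OF d] card_ORC_image[OF a(1)] delete_fixed_point_ends[OF a(1) x \<open>2 \<le> n\<close>]
      a(2) \<open>2 \<le> n\<close> by simp
  moreover have "insertion_point n (delete_point n x a) = x"
    using insertion_point_eq[OF d insertion_slot_delete_point[OF a(1) x]] .
  ultimately show ?thesis
    using d fixpt_eq[OF a(1) x] insert_delete_point[OF a(1) x] unfolding ORC_rank_def by simp
qed

lemma insert_fixed_point_mem:
  assumes g_mem: "g \<in> ORC_rank (n - 1) n p" and "2 \<le> n"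
  shows "insert_fixed_point n (insertion_point n g) g \<in> ORC_fix n p - ORC_fix_jump n p \<and>
         fixpt n (insert_fixed_point n (insertion_point n g) g) = insertion_point n g \<and>
         delete_point n (insertion_point n g) (insert_fixed_point n (insertion_point n g) g) = g"
proof -
  have g: "g \<in> ORC (n - 1) n" "card (g ` {1..n-1}) = p" using g_mem unfolding ORC_rank_def by auto
  obtain x where x: "insertion_slot n g x" using insertion_slot_exists \<open>2 \<le> n\<close> by fastforce
  then have gx: "insertion_point n g = x" by (rule insertion_point_eq[OF g(1)])
  define a where "a = insert_fixed_point n x g"
  have a: "a \<in> ORC n n" unfolding a_def by (rule insert_fixed_point_ORC[OF g(1) x])
  have ax: "x \<in> {1..n}" "a x = x"
    using x unfolding a_def insert_fixed_point_def insertion_slot_def by auto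
  have "card (a ` {1..n}) = p"
    using card_ORC_image[OF a] card_ORC_image[OF g(1)] insert_fixed_point_ends[OF g(1) x \<open>2 \<le> n\<close>]
      g(2) \<open>2 \<le> n\<close> unfolding a_def by simp
  then have "a \<in> ORC_fix n p" using a ax unfolding ORC_fix_def ORC_rank_def by auto
  moreover have "a \<notin> ORC_fix_jump n p"
  proof
    assume "a \<in> ORC_fix_jump n p"
    then obtain y where y: "y \<in> {2..<n}" "a (y - 1) = Suc y" "a y = y" "a (Suc y) = y - 1"
      unfolding ORC_fix_jump_def by auto
    then have "y = x" using ORC_fixed_point_unique[OF a _ _ ax] by auto
    moreover have "x - 1 \<in> {1..n}" "x - 1 < x" using y \<open>y = x\<close> by auto
    ultimately have "g (x - 1) = Suc x" "g x = x - 1"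
      using y ax unfolding a_def insert_fixed_point_def by auto
    moreover have "1 \<le> x - 1" "x - 1 < n - 1" using y \<open>y = x\<close> by auto
    ultimately show False using ORC_step[OF g(1)] \<open>x - 1 < x\<close> by fastforce
  qed
  ultimately show ?thesis
    using fixpt_eq[OF a ax] gx delete_insert_fixed_point[OF g(1) ax(1)] unfolding a_def by auto
qed

lemma card_ORC_fix_minus_jump:
  assumes "2 \<le> n"
  shows "card (ORC_fix n p - ORC_fix_jump n p) = card (ORC_rank (n - 1) n p)"
proof -
  have "bij_betw (\<lambda>a. delete_point n (fixpt n a) a)
      (ORC_fix n p - ORC_fix_jump n p) (ORC_rank (n - 1) n p)"
    by (rule bij_betw_byWitness[where f' = "\<lambda>g. insert_fixed_point n (insertion_point n g) g"])
      (use delete_fixed_point_mem[OF _ assms] insert_fixed_point_mem[OF _ assms] in auto)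
  then show ?thesis by (rule bij_betw_same_card)
qed

definition cut_jump :: "nat \<Rightarrow> nat \<Rightarrow> (nat \<Rightarrow> nat) \<Rightarrow> (nat \<Rightarrow> nat)" where
  "cut_jump n x a = restrict (\<lambda>y. if y < x then a y - 2 else a (y + 2)) {1..n-2}"

definition paste_jump :: "nat \<Rightarrow> nat \<Rightarrow> (nat \<Rightarrow> nat) \<Rightarrow> (nat \<Rightarrow> nat)" where
  "paste_jump n z c = restrict (\<lambda>y. if y \<le> z then c y + 2 else if y = Suc z then Suc z
     else if y = z + 2 then z else c (y - 2)) {1..n}"

context
  fixes n x :: nat and a :: "nat \<Rightarrow> nat"
  assumes a: "a \<in> ORC n n" and x: "x \<in> {2..<n}"
    and jump: "a (x - 1) = Suc x" "a x = x" "a (Suc x) = x - 1"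
begin

lemma jump_above: "1 \<le> y \<Longrightarrow> y < x \<Longrightarrow> Suc x \<le> a y"
  using ORC_antimono_contract[OF a, of y "x - 1"] x jump by auto

lemma jump_below: "x < y \<Longrightarrow> y \<le> n \<Longrightarrow> a y \<le> x - 1"
  using ORC_antimono_contract[OF a, of "Suc x" y] x jump by auto

lemma cut_jump_ORC: "cut_jump n x a \<in> ORC (n - 2) (n - 2)"
  unfolding cut_jump_def
proof (rule restrict_in_ORC)
  fix y assume y: "y \<in> {1..n-2}"
  show "(if y < x then a y - 2 else a (y + 2)) \<in> {1..n-2}"
  proof (cases "y < x")
    case True
    then show ?thesis using jump_above[of y] ORC_range[OF a, of y] x y by auto
  next
    case False
    then have "x < y + 2" "y + 2 \<le> n" using y by auto
    then show ?thesis using False jump_below ORC_range[OF a, of "y + 2"] x by fastforce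
  qed
next
  fix y assume y: "1 \<le> y" "y < n - 2"
  consider "Suc y < x" | "Suc y = x" | "x \<le> y" by linarith
  then show "(if Suc y < x then a (Suc y) - 2 else a (Suc y + 2)) \<le> (if y < x then a y - 2 else a (y + 2)) \<and>
      (if y < x then a y - 2 else a (y + 2)) \<le> Suc (if Suc y < x then a (Suc y) - 2 else a (Suc y + 2))"
  proof cases
    case 1
    moreover have "y < n" using y by linarith
    ultimately show ?thesis using ORC_step[OF a y(1)] jump_above[of "Suc y"] by auto
  next
    case 2
    moreover have "Suc x < n" using y 2 by linarith
    ultimately show ?thesis using ORC_step[OF a, of "Suc x"] jump by auto
  next
    case 3
    moreover have "1 \<le> y + 2" "y + 2 < n" using y by linarith+
    ultimately show ?thesis using ORC_step[OF a] by auto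
  qed
qed

lemma cut_jump_fixed: "cut_jump n x a (x - 1) = x - 1"
  using x jump unfolding cut_jump_def by auto

lemma cut_jump_first: "cut_jump n x a 1 = a 1 - 2"
  using x unfolding cut_jump_def by auto

lemma cut_jump_last: "cut_jump n x a (n - 2) = a n"
proof (cases "Suc x = n")
  case True
  then show ?thesis using cut_jump_fixed jump by auto
next
  case False
  then have "x \<le> n - 2" "n - 2 + 2 = n" using x by auto
  then show ?thesis using x unfolding cut_jump_def by auto
qed

lemma paste_cut_jump: "paste_jump n (x - 1) (cut_jump n x a) = a"
proof -
  have "paste_jump n (x - 1) (cut_jump n x a) = restrict a {1..n}"
    unfolding paste_jump_def
  proof (rule restrict_ext)
    fix y assume y: "y \<in> {1..n}"
    consider "y < x" | "y = x" | "y = Suc x" | "x + 2 \<le> y" by linarith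
    then show "(if y \<le> x - 1 then cut_jump n x a y + 2 else if y = Suc (x - 1) then Suc (x - 1)
        else if y = x - 1 + 2 then x - 1 else cut_jump n x a (y - 2)) = a y"
    proof cases
      case 1
      then have "Suc x \<le> a y" "y \<le> x - 1" "y \<in> {1..n-2}" using jump_above y x by auto
      then show ?thesis using 1 unfolding cut_jump_def by auto
    next
      case 4
      then have "y - 2 \<in> {1..n-2}" "\<not> y \<le> x - 1" "y \<noteq> Suc (x - 1)" "y \<noteq> x - 1 + 2"
        "\<not> y - 2 < x" "y - 2 + 2 = y" using x y by auto
      then show ?thesis unfolding cut_jump_def by simp
    qed (use x jump in auto)
  qed
  then show ?thesis using ORC_restrict[OF a] by simp
qed

end

context
  fixes n z :: nat and c :: "nat \<Rightarrow> nat"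
  assumes c: "c \<in> ORC (n - 2) (n - 2)" and z: "z \<in> {1..n-2}" and fixed: "c z = z"
begin

lemma paste_jump_ORC: "paste_jump n z c \<in> ORC n n"
proof -
  define f where "f y = (if y \<le> z then c y + 2 else if y = Suc z then Suc z
     else if y = z + 2 then z else c (y - 2))" for y
  have "restrict f {1..n} \<in> ORC n n"
  proof (rule restrict_in_ORC)
    fix y assume y: "y \<in> {1..n}"
    consider "y \<le> z" | "y = Suc z" | "y = z + 2" | "z + 2 < y" by linarith
    then show "f y \<in> {1..n}"
    proof cases
      case 1
      then have "y \<in> {1..n-2}" using y z by auto
      then show ?thesis using ORC_range[OF c] 1 unfolding f_def by fastforce
    next
      case 4
      then have "y - 2 \<in> {1..n-2}" using y z by auto
      then show ?thesis using ORC_range[OF c] 4 unfolding f_def by fastforce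
    qed (use z in \<open>auto simp: f_def\<close>)
  next
    fix y assume y: "1 \<le> y" "y < n"
    consider "y < z" | "y = z" | "y = Suc z" | "y = z + 2" | "z + 2 < y" by linarith
    then show "f (Suc y) \<le> f y \<and> f y \<le> Suc (f (Suc y))"
    proof cases
      case 1
      then have "y < n - 2" using z by auto
      then show ?thesis using ORC_step[OF c y(1)] 1 unfolding f_def by auto
    next
      case 4
      then have "z < n - 2" using y by auto
      then show ?thesis using ORC_step[OF c, of z] fixed z 4 unfolding f_def by auto
    next
      case 5
      then have "1 \<le> y - 2" "y - 2 < n - 2" "Suc y - 2 = Suc (y - 2)" using y by auto
      then show ?thesis using ORC_step[OF c] 5 unfolding f_def by auto
    qed (use fixed in \<open>auto simp: f_def\<close>)
  qed
  moreover have "paste_jump n z c = restrict f {1..n}"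
    unfolding paste_jump_def f_def ..
  ultimately show ?thesis by simp
qed

lemma paste_jump_values:
  "paste_jump n z c z = Suc (Suc z)" "paste_jump n z c (Suc z) = Suc z"
  "paste_jump n z c (Suc (Suc z)) = z"
  using z fixed unfolding paste_jump_def by auto

lemma paste_jump_first: "paste_jump n z c 1 = c 1 + 2"
  using z unfolding paste_jump_def by auto

lemma paste_jump_last: "paste_jump n z c n = c (n - 2)"
  using z fixed unfolding paste_jump_def by auto

lemma cut_paste_jump: "cut_jump n (Suc z) (paste_jump n z c) = c"
proof -
  have "cut_jump n (Suc z) (paste_jump n z c) = restrict c {1..n-2}"
    unfolding cut_jump_def paste_jump_def using z by (intro restrict_ext) auto
  then show ?thesis using ORC_restrict[OF c] by simp
qed

end

lemma cut_jump_mem: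
  assumes a_mem: "a \<in> ORC_fix_jump n p"
  shows "cut_jump n (fixpt n a) a \<in> ORC_fix (n - 2) (p - 2) \<and>
         fixpt (n - 2) (cut_jump n (fixpt n a) a) = fixpt n a - 1 \<and>
         paste_jump n (fixpt n a - 1) (cut_jump n (fixpt n a) a) = a"
proof -
  obtain x where a: "a \<in> ORC n n" "card (a ` {1..n}) = p" and x: "x \<in> {2..<n}"
    and jump: "a (x - 1) = Suc x" "a x = x" "a (Suc x) = x - 1"
    using a_mem unfolding ORC_fix_jump_def ORC_fix_def ORC_rank_def by auto
  have fx: "fixpt n a = x" using fixpt_eq[OF a(1)] x jump by auto
  have c: "cut_jump n x a \<in> ORC (n - 2) (n - 2)" using cut_jump_ORC[OF a(1) x jump] .
  have cx: "x - 1 \<in> {1..n-2}" "cut_jump n x a (x - 1) = x - 1"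
    using cut_jump_fixed[OF a(1) x jump] x by auto
  have "Suc x \<le> a 1" "a n \<le> x - 1"
    using jump_above[OF a(1) x jump, of 1] jump_below[OF a(1) x jump, of n] x by auto
  then have "card (cut_jump n x a ` {1..n-2}) = p - 2"
    using card_ORC_image[OF c] card_ORC_image[OF a(1)] a(2) x
      cut_jump_first[OF a(1) x jump] cut_jump_last[OF a(1) x jump] by auto
  then have "cut_jump n x a \<in> ORC_fix (n - 2) (p - 2)"
    using c cx unfolding ORC_fix_def ORC_rank_def by blast
  then show ?thesis
    using fx fixpt_eq[OF c cx] paste_cut_jump[OF a(1) x jump] by simp
qed

lemma paste_jump_mem:
  assumes c_mem: "c \<in> ORC_fix (n - 2) (p - 2)" and "2 \<le> p"
  shows "paste_jump n (fixpt (n - 2) c) c \<in> ORC_fix_jump n p \<and>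
         fixpt n (paste_jump n (fixpt (n - 2) c) c) = Suc (fixpt (n - 2) c) \<and>
         cut_jump n (Suc (fixpt (n - 2) c)) (paste_jump n (fixpt (n - 2) c) c) = c"
proof -
  obtain z where c: "c \<in> ORC (n - 2) (n - 2)" "card (c ` {1..n-2}) = p - 2"
    and z: "z \<in> {1..n-2}" "c z = z"
    using c_mem unfolding ORC_fix_def ORC_rank_def by auto
  have fz: "fixpt (n - 2) c = z" using fixpt_eq[OF c(1) z] .
  have a: "paste_jump n z c \<in> ORC n n" using paste_jump_ORC[OF c(1) z] .
  have "c (n - 2) \<le> c 1" using ORC_antimono_contract[OF c(1), of 1 "n - 2"] z by auto
  moreover have "card (paste_jump n z c ` {1..n}) = Suc (c 1 + 2) - c (n - 2)"
    using card_ORC_image[OF a] paste_jump_first[OF c(1) z] paste_jump_last[OF c(1) z] z by auto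
  moreover have "Suc (c 1) - c (n - 2) = p - 2" using card_ORC_image[OF c(1)] c(2) z by auto
  ultimately have "card (paste_jump n z c ` {1..n}) = p" using \<open>2 \<le> p\<close> by linarith
  moreover have "Suc z \<in> {2..<n}" "Suc z \<in> {1..n}" using z by auto
  ultimately have "paste_jump n z c \<in> ORC_fix_jump n p"
    using a paste_jump_values[OF c(1) z] unfolding ORC_fix_jump_def ORC_fix_def ORC_rank_def
    by (auto intro!: bexI[of _ "Suc z"])
  then show ?thesis
    using fz fixpt_eq[OF a \<open>Suc z \<in> {1..n}\<close> paste_jump_values(2)[OF c(1) z]]
      cut_paste_jump[OF c(1) z] by simp
qed

lemma card_ORC_fix_jump:
  assumes "2 \<le> p"
  shows "card (ORC_fix_jump n p) = card (ORC_fix (n - 2) (p - 2))"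
proof -
  have "bij_betw (\<lambda>a. cut_jump n (fixpt n a) a) (ORC_fix_jump n p) (ORC_fix (n - 2) (p - 2))"
    by (rule bij_betw_byWitness[where f' = "\<lambda>c. paste_jump n (fixpt (n - 2) c) c"])
      (use cut_jump_mem paste_jump_mem[OF _ assms] in auto)
  then show ?thesis by (rule bij_betw_same_card)
qed

lemma finite_ORC: "finite (ORC m n)"
  by (rule finite_subset[of _ "{1..m} \<rightarrow>\<^sub>E {1..n}"]) (auto simp: ORC_def finite_PiE)

lemma card_ORC_fix_split:
  assumes "2 \<le> n"
  shows "card (ORC_fix n p) = card (ORC_rank (n - 1) n p) + card (ORC_fix_jump n p)"
proof -
  have sub: "ORC_fix_jump n p \<subseteq> ORC_fix n p" unfolding ORC_fix_jump_def by auto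
  have fin: "finite (ORC_fix n p)"
    by (rule finite_subset[OF _ finite_ORC]) (auto simp: ORC_fix_def ORC_rank_def)
  show ?thesis
    using card_ORC_fix_minus_jump[OF assms, of p] card_Diff_subset[OF finite_subset[OF sub fin] sub]
      card_mono[OF fin sub] by linarith
qed

theorem lemma3p8:
  shows "(\<forall>n\<ge>1. b n 1 = n) \<and> b 2 2 = 0 \<and>
    (\<forall>n p. 2 \<le> p \<and> p \<le> n \<longrightarrow>
       b n p = (n - p + 1) * ((n - 2) choose (p - 1)) + b (n - 2) (p - 2))"
proof -
  have rec: "b n p = (n - p + 1) * ((n - 2) choose (p - 1)) + b (n - 2) (p - 2)"
    if "2 \<le> p" "p \<le> n" for n p
  proof -
    have "b n p = card (ORC_rank (n - 1) n p) + card (ORC_fix_jump n p)"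
      using b_eq_card_ORC_fix card_ORC_fix_split that by simp
    also have "\<dots> = (n + 1 - p) * ((n - 2) choose (p - 1)) + b (n - 2) (p - 2)"
      using card_ORC_rank[of "n - 1" p n] card_ORC_fix_jump[of p n] b_eq_card_ORC_fix that
      by (simp add: numeral_2_eq_2)
    finally show ?thesis using that by (simp add: Suc_diff_le)
  qed
  have "b n 1 = n" if "1 \<le> n" for n
    using b_eq_card_ORC_fix ORC_fix_rank_one card_ORC_rank[of n 1 n] that by simp
  moreover have "b 2 2 = 0" using rec[of 2 2] b_def by simp
  ultimately show ?thesis using rec by blast
qed

end
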